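(* Let $k\ge2$, let $\boldsymbol{\pi}\in\Delta_k$ with $\pi_i>0$ for all $i$, and let $f:\mathbb{R}^{k-1}_+\to\mathbb{R}$ be a differentiable convex function. For density ratio vectors $\mathbf{r}(x),\hat{\mathbf{r}}(x)\in\mathbb{R}^{k-1}_+$ (extended by $r_k=\hat r_k=1$), define class probability vectors $\boldsymbol{\eta}(x)=\Psi_{\mathrm{dr}}^{-1}(\mathbf{r}(x))$ and $\hat{\boldsymbol{\eta}}(x)=\Psi_{\mathrm{dr}}^{-1}(\hat{\mathbf{r}}(x))$, where $[\Psi_{\mathrm{dr}}^{-1}(\mathbf{r})]_i=\pi_i r_i/\sum_{j=1}^k\pi_j r_j$. Then for all $x\in\mathcal{X}$, $$\mathbf{B}_f(\boldsymbol{\eta}(x),\hat{\boldsymbol{\eta}}(x))=\frac{\pi_k}{\pi_k+\sum_{i=1}^{k-1}\pi_i r_i(x)}\,\mathbf{B}_{f^\circledast_\pi}(\mathbf{r}(x),\hat{\mathbf{r}}(x)),$$ where $f$ is evaluated on the first $k-1$ coordinates of $\boldsymbol{\eta},\hat{\boldsymbol{\eta}}$, and $f^\circledast_\pi:\mathbb{R}^{k-1}_+\to\mathbb{R}$ is $$f^\circledast_\pi(r_1,\ldots,r_{k-1})=\Big(1+\sum_{i=1}^{k-1}\pi_i r_i/\pi_k\Big)\, f\Big(\frac{\boldsymbol{\pi}_{[1:k-1]}\circ\mathbf{r}}{\pi_k+\sum_{i=1}^{k-1}\pi_i r_i}\Big).$$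
   Context: $\Delta_k=\{\mathbf{p}\in\mathbb{R}^k_{\ge0}:\mathbf{1}^\top\mathbf{p}=1\}$. $\boldsymbol{\pi}_{[1:k-1]}$ is the restriction of $\boldsymbol{\pi}$ to its first $k-1$ coordinates and $\circ$ is the elementwise product. The Bregman divergence of a differentiable convex $\phi$ is $\mathbf{B}_\phi(\mathbf{x},\mathbf{y})=\phi(\mathbf{x})-\phi(\mathbf{y})-\langle \mathbf{x}-\mathbf{y},\nabla\phi(\mathbf{y})\rangle$. *)

theory Defs
  imports "HOL-Analysis.Analysis"
begin

text \<open>Index conventions: R^k is real^('n option), where the coordinate None plays
  the role of the k-th (last) coordinate and Some i (i :: 'n) the first k-1 ones.
  So k = CARD('n option) = CARD('n) + 1, and k >= 2 holds automatically.
  R^(k-1) is real^'n.\<close>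

definition pos_orthant :: "(real^'n) set" where
  "pos_orthant = {x. \<forall>i. 0 < x $ i}"

definition in_simplex :: "real^'m \<Rightarrow> bool" where
  "in_simplex p \<longleftrightarrow> (\<forall>i. 0 \<le> p $ i) \<and> (\<Sum>i\<in>UNIV. p $ i) = 1"

text \<open>Bregman divergence; the term <x - y, grad phi(y)> is the derivative of phi at y
  applied to x - y.\<close>
definition bregman :: "('a::real_normed_vector \<Rightarrow> real) \<Rightarrow> 'a \<Rightarrow> 'a \<Rightarrow> real" where
  "bregman \<phi> x y = \<phi> x - \<phi> y - frechet_derivative \<phi> (at y) (x - y)"

definition ext_ratio :: "real^'n \<Rightarrow> real^('n option)" where
  "ext_ratio r = (\<chi> j. case j of None \<Rightarrow> 1 | Some i \<Rightarrow> r $ i)"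

definition psi_dr_inv :: "real^('n option) \<Rightarrow> real^'n \<Rightarrow> real^('n option)" where
  "psi_dr_inv \<pi> r = (\<chi> i. \<pi> $ i * ext_ratio r $ i / (\<Sum>j\<in>UNIV. \<pi> $ j * ext_ratio r $ j))"

definition first_coords :: "real^('n option) \<Rightarrow> real^'n" where
  "first_coords v = (\<chi> i. v $ Some i)"

definition f_star :: "real^('n option) \<Rightarrow> (real^'n \<Rightarrow> real) \<Rightarrow> real^'n \<Rightarrow> real" where
  "f_star \<pi> f r =
     (1 + (\<Sum>i\<in>UNIV. \<pi> $ Some i * r $ i / \<pi> $ None)) *
     f (\<chi> i. \<pi> $ Some i * r $ i / (\<pi> $ None + (\<Sum>j\<in>UNIV. \<pi> $ Some j * r $ j)))"

end

theory Submission
  imports Defs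
begin

text \<open>With odds \<open>o_i = \<pi>_i r_i / \<pi>_k\<close> (a linear function of \<open>r\<close>) and \<open>s = 1 + \<Sum>o_i\<close>, the
  class probabilities are \<open>\<eta> = o / s\<close> and \<open>f\<^sup>\<circledast>\<^sub>\<pi>(r) = s f(o / s)\<close>: \<open>f\<^sup>\<circledast>\<^sub>\<pi>\<close> is the
  perspective of \<open>f\<close> composed with an affine map. A first-order computation shows that
  Bregman divergences of such perspectives are those of \<open>f\<close>, scaled by \<open>s\<close> at the first
  argument; and \<open>s(r) = (\<pi>_k + \<Sum>\<pi>_i r_i) / \<pi>_k\<close> is the reciprocal of the factor in the
  statement.\<close>

lemma has_derivative_perspective:
  fixes A :: "'a::real_normed_vector \<Rightarrow> 'b::real_normed_vector" and c :: "'a \<Rightarrow> real"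
    and s :: real and f :: "'b \<Rightarrow> real"
  defines "G \<equiv> \<lambda>h. inverse (s + c h) *\<^sub>R A h"
  assumes A: "bounded_linear A" and c: "bounded_linear c"
    and f: "(f has_derivative D) (at (G q))" and nz: "s + c q \<noteq> 0"
  shows "((\<lambda>h. (s + c h) * f (G h)) has_derivative
           (\<lambda>h. D (A h - c h *\<^sub>R G q) + c h * f (G q))) (at q)"
proof -
  have S: "((\<lambda>h. s + c h) has_derivative c) (at q)"
    using has_derivative_add[OF has_derivative_const bounded_linear.has_derivative[OF c has_derivative_ident]]
    by simp
  have "(G has_derivative (\<lambda>h. inverse (s + c q) *\<^sub>R (A h - c h *\<^sub>R G q))) (at q)"
    unfolding G_def using nz
    by (auto intro!: derivative_eq_intros bounded_linear.has_derivative[OF A]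
        bounded_linear.has_derivative[OF c] simp: field_simps scaleR_diff_right)
  from has_derivative_mult[OF S has_derivative_compose[OF this f]]
  have "((\<lambda>h. (s + c h) * f (G h)) has_derivative
          (\<lambda>h. (s + c q) * D (inverse (s + c q) *\<^sub>R (A h - c h *\<^sub>R G q)) + c h * f (G q))) (at q)" .
  moreover have "(s + c q) * D (inverse (s + c q) *\<^sub>R v) = D v" for v
    using has_derivative_linear[OF f] nz by (simp add: linear_scale)
  ultimately show ?thesis by simp
qed

lemma bregman_perspective:
  fixes A :: "'a::real_normed_vector \<Rightarrow> 'b::real_normed_vector" and c :: "'a \<Rightarrow> real"
    and s :: real and f :: "'b \<Rightarrow> real"
  defines "G \<equiv> \<lambda>h. inverse (s + c h) *\<^sub>R A h"
  assumes A: "bounded_linear A" and c: "bounded_linear c"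
    and f: "f differentiable (at (G q))"
    and nz_r: "s + c r \<noteq> 0" and nz_q: "s + c q \<noteq> 0"
  shows "bregman (\<lambda>h. (s + c h) * f (G h)) r q = (s + c r) * bregman f (G r) (G q)"
proof -
  define D where "D = frechet_derivative f (at (G q))"
  have D: "(f has_derivative D) (at (G q))"
    using f frechet_derivative_works D_def by blast
  have A_G: "A h = (s + c h) *\<^sub>R G h" if "s + c h \<noteq> 0" for h
    using that by (simp add: G_def)
  have "A (r - q) - (c r - c q) *\<^sub>R G q = (s + c r) *\<^sub>R (G r - G q)"
    by (simp add: A_G[OF nz_r] A_G[OF nz_q] linear_diff[OF bounded_linear.linear[OF A]]
        algebra_simps)
  then have D_step: "D (A (r - q) - (c r - c q) *\<^sub>R G q) = (s + c r) * D (G r - G q)"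
    using has_derivative_linear[OF D] by (simp add: linear_scale)
  have "((\<lambda>h. (s + c h) * f (G h)) has_derivative
          (\<lambda>h. D (A h - c h *\<^sub>R G q) + c h * f (G q))) (at q)"
    using has_derivative_perspective[OF A c _ nz_q] D by (simp add: G_def)
  then have "frechet_derivative (\<lambda>h. (s + c h) * f (G h)) (at q) (r - q)
      = (s + c r) * D (G r - G q) + (c r - c q) * f (G q)"
    by (simp add: frechet_derivative_at[symmetric] D_step linear_diff[OF bounded_linear.linear[OF c]])
  then show ?thesis
    by (simp add: bregman_def D_def[symmetric] algebra_simps)
qed

lemma sum_UNIV_option:
  fixes g :: "'n::finite option \<Rightarrow> 'a::comm_monoid_add"
  shows "(\<Sum>j\<in>UNIV. g j) = g None + (\<Sum>i\<in>UNIV. g (Some i))"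
  by (simp add: UNIV_option_conv sum.reindex)

definition class_odds :: "real^('n option) \<Rightarrow> real^'n \<Rightarrow> real^'n" where
  "class_odds \<pi> r = (\<chi> i. \<pi> $ Some i * r $ i / \<pi> $ None)"

lemma bounded_linear_class_odds: "bounded_linear (class_odds \<pi>)"
  unfolding class_odds_def linear_conv_bounded_linear[symmetric]
  by (intro linearI) (auto simp: vec_eq_iff add_divide_distrib algebra_simps)

lemma bounded_linear_sum_class_odds: "bounded_linear (\<lambda>r. \<Sum>i\<in>UNIV. class_odds \<pi> r $ i)"
  by (intro bounded_linear_sum bounded_linear_compose[OF bounded_linear_vec_nth bounded_linear_class_odds])

lemma first_coords_psi_dr_inv:
  assumes "\<pi> $ None \<noteq> 0"
  shows "first_coords (psi_dr_inv \<pi> r)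
    = inverse (1 + (\<Sum>i\<in>UNIV. class_odds \<pi> r $ i)) *\<^sub>R class_odds \<pi> r"
  using assms
  by (simp add: first_coords_def psi_dr_inv_def ext_ratio_def class_odds_def vec_eq_iff
      sum_UNIV_option sum_divide_distrib[symmetric] field_simps)

lemma f_star_eq_perspective:
  assumes "\<pi> $ None \<noteq> 0"
  shows "f_star \<pi> f = (\<lambda>r. (1 + (\<Sum>i\<in>UNIV. class_odds \<pi> r $ i)) *
                            f (first_coords (psi_dr_inv \<pi> r)))"
proof
  fix r
  have "(\<chi> i. \<pi> $ Some i * r $ i / (\<pi> $ None + (\<Sum>j\<in>UNIV. \<pi> $ Some j * r $ j)))
      = first_coords (psi_dr_inv \<pi> r)"
    by (simp add: first_coords_def psi_dr_inv_def ext_ratio_def vec_eq_iff sum_UNIV_option)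
  then show "f_star \<pi> f r = (1 + (\<Sum>i\<in>UNIV. class_odds \<pi> r $ i)) *
                            f (first_coords (psi_dr_inv \<pi> r))"
    by (simp add: f_star_def class_odds_def)
qed

lemma first_coords_psi_dr_inv_pos:
  assumes "\<forall>i. 0 < \<pi> $ i" and "r \<in> pos_orthant"
  shows "first_coords (psi_dr_inv \<pi> r) \<in> pos_orthant"
proof -
  have "0 < \<pi> $ j * ext_ratio r $ j" for j
    using assms by (auto simp: ext_ratio_def pos_orthant_def split: option.split)
  then show ?thesis
    by (simp add: pos_orthant_def first_coords_def psi_dr_inv_def sum_pos)
qed

lemma one_plus_sum_class_odds:
  assumes "\<pi> $ None \<noteq> 0"
  shows "1 + (\<Sum>i\<in>UNIV. class_odds \<pi> r $ i)
    = (\<pi> $ None + (\<Sum>i\<in>UNIV. \<pi> $ Some i * r $ i)) / \<pi> $ None"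
  using assms by (simp add: class_odds_def sum_divide_distrib[symmetric] add_divide_distrib)

lemma one_plus_sum_class_odds_pos:
  assumes "\<forall>i. 0 < \<pi> $ i" and "r \<in> pos_orthant"
  shows "0 < 1 + (\<Sum>i\<in>UNIV. class_odds \<pi> r $ i)"
proof -
  have "0 \<le> class_odds \<pi> r $ i" for i
    using assms by (simp add: class_odds_def pos_orthant_def less_imp_le)
  then show ?thesis by (simp add: add_pos_nonneg sum_nonneg)
qed

lemma bregman_f_star:
  assumes pi_pos: "\<forall>i. 0 < \<pi> $ i"
    and f: "f differentiable (at (first_coords (psi_dr_inv \<pi> q)))"
    and r: "r \<in> pos_orthant" and q: "q \<in> pos_orthant"
  shows "bregman (f_star \<pi> f) r q
    = (1 + (\<Sum>i\<in>UNIV. class_odds \<pi> r $ i)) *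
      bregman f (first_coords (psi_dr_inv \<pi> r)) (first_coords (psi_dr_inv \<pi> q))"
proof -
  have p: "\<pi> $ None \<noteq> 0" using pi_pos by (metis less_irrefl)
  show ?thesis
    using f one_plus_sum_class_odds_pos[OF pi_pos r] one_plus_sum_class_odds_pos[OF pi_pos q]
    unfolding f_star_eq_perspective[OF p] first_coords_psi_dr_inv[OF p]
    by (intro bregman_perspective[OF bounded_linear_class_odds bounded_linear_sum_class_odds]) simp_all
qed

theorem proposition2:
  fixes \<pi> :: "real^('n::finite option)"
    and f :: "real^'n \<Rightarrow> real"
    and r rhat :: "'x \<Rightarrow> real^'n"
    and \<X> :: "'x set"
  assumes simplex: "in_simplex \<pi>"
    and pi_pos: "\<forall>i. 0 < \<pi> $ i"
    and f_convex: "convex_on pos_orthant f"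
    and f_diff: "\<forall>y\<in>pos_orthant. f differentiable (at y)"
    and r_pos: "\<forall>x\<in>\<X>. r x \<in> pos_orthant"
    and rhat_pos: "\<forall>x\<in>\<X>. rhat x \<in> pos_orthant"
  shows "\<forall>x\<in>\<X>.
     bregman f (first_coords (psi_dr_inv \<pi> (r x))) (first_coords (psi_dr_inv \<pi> (rhat x)))
     = \<pi> $ None / (\<pi> $ None + (\<Sum>i\<in>UNIV. \<pi> $ Some i * r x $ i))
       * bregman (f_star \<pi> f) (r x) (rhat x)"
proof
  fix x assume "x \<in> \<X>"
  then have r: "r x \<in> pos_orthant" and rhat: "rhat x \<in> pos_orthant"
    using r_pos rhat_pos by auto
  have p: "\<pi> $ None \<noteq> 0" using pi_pos by (metis less_irrefl)
  have "f differentiable at (first_coords (psi_dr_inv \<pi> (rhat x)))"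
    using f_diff first_coords_psi_dr_inv_pos[OF pi_pos rhat] by blast
  note breg = bregman_f_star[OF pi_pos this r rhat]
  have "0 < (\<pi> $ None + (\<Sum>i\<in>UNIV. \<pi> $ Some i * r x $ i)) / \<pi> $ None"
    using one_plus_sum_class_odds_pos[OF pi_pos r] unfolding one_plus_sum_class_odds[OF p] .
  then have "\<pi> $ None + (\<Sum>i\<in>UNIV. \<pi> $ Some i * r x $ i) \<noteq> 0" by auto
  then have weight: "\<pi> $ None / (\<pi> $ None + (\<Sum>i\<in>UNIV. \<pi> $ Some i * r x $ i))
      * (1 + (\<Sum>i\<in>UNIV. class_odds \<pi> (r x) $ i)) = 1"
    using p unfolding one_plus_sum_class_odds[OF p] by simp
  show "bregman f (first_coords (psi_dr_inv \<pi> (r x))) (first_coords (psi_dr_inv \<pi> (rhat x)))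
     = \<pi> $ None / (\<pi> $ None + (\<Sum>i\<in>UNIV. \<pi> $ Some i * r x $ i))
       * bregman (f_star \<pi> f) (r x) (rhat x)"
    by (simp only: breg weight mult.assoc[symmetric] mult_1_left)
qed

end
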